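(* Let $\Lambda$ be a row-finite source-free $k$-graph and fix a $\Lambda$-semibranching function system on a $\sigma$-finite measure space $(X, \mu)$. Suppose that a vertex $v$ of $\Lambda$ satisfies $R_{\tau}=R_{v\tau} =D_v$ for all $\tau \in v\Lambda$. If there is a measurable subset $X_v$ of $D_v$ with $0 < \mu(X_v) < \mu(D_v)$, then no $\Lambda$-projective representation arising from this $\Lambda$-semibranching function system is monic.
   Context: A $k$-graph is a countable small category $\Lambda$ with a functor $d:\Lambda\to\mathbb{N}^k$ with unique factorization; vertices $\Lambda^0$, range/source $r,s$, $v\Lambda$ the paths with range $v$; row-finite/source-free: paths of fixed degree and range form a finite/nonempty set. $C^*(\Lambda)$ is the universal $C^*$-algebra of a Cuntz–Krieger $\Lambda$-family. A $\Lambda$-semibranching function system on $(X,\mu)$: measurable $D_\lambda$, prefixing maps $\tau_\lambda:D_\lambda\to X$ with ranges $R_\lambda=\tau_\lambda(D_\lambda)$, coding maps $\tau^m$ such that for each $m\in\mathbb{N}^k$ $\{\tau_\lambda:d(\lambda)=m\}$ is a semibranching function system with coding map $\tau^m$ ($0<\mu(D_\lambda)<\infty$, ranges of finite measure, a.e. disjoint, covering $X$ a.e., $d(\mu\circ\tau_\lambda)/d\mu>0$ a.e., $\tau^m\circ\tau_\lambda=\mathrm{id}$), $\tau_v=\mathrm{id}$ for $v\in\Lambda^0$, $R_\nu\subseteq D_\lambda$ a.e. and $\tau_\lambda\tau_\nu=\tau_{\lambda\nu}$ a.e., $\tau^m\tau^n=\tau^{m+n}$. A $\Lambda$-projective representation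 arising from it: choose $f_\lambda\in L^2$ with $0\ne d(\mu\circ\tau_\lambda^{-1})/d\mu=|f_\lambda|^2$, $f_\lambda(f_\nu\circ\tau^{d(\lambda)})=f_{\lambda\nu}$, and set $T_\lambda f=f_\lambda\cdot(f\circ\tau^{d(\lambda)})$. A representation $\{t_\lambda\}$ on $\mathcal H$ is monic if all $t_\lambda\ne0$ and some $\xi$ satisfies $\overline{\mathrm{span}}\{t_\lambda t_\lambda^*\xi\}=\mathcal H$. *)

theory Defs
  imports "HOL-Probability.Probability"
begin

text \<open>Degrees in N^k are modelled as functions nat => nat vanishing from k on.\<close>
definition degs :: "nat \<Rightarrow> (nat \<Rightarrow> nat) set" where
  "degs k = {m. \<forall>i\<ge>k. m i = 0}"

text \<open>A k-graph: a countable small category with morphism set L, objects (identity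
  morphisms) V, range r, source s, composition c (c a b defined when s a = r b),
  and a degree functor d into N^k with the unique factorisation property.\<close>
definition kgraph ::
  "nat \<Rightarrow> 'p set \<Rightarrow> 'p set \<Rightarrow> ('p \<Rightarrow> 'p) \<Rightarrow> ('p \<Rightarrow> 'p) \<Rightarrow> ('p \<Rightarrow> 'p \<Rightarrow> 'p)
    \<Rightarrow> ('p \<Rightarrow> nat \<Rightarrow> nat) \<Rightarrow> bool" where
  "kgraph k L V r s c d \<longleftrightarrow>
     countable L \<and> V \<subseteq> L \<and>
     (\<forall>a\<in>L. r a \<in> V \<and> s a \<in> V) \<and>
     (\<forall>v\<in>V. r v = v \<and> s v = v) \<and>
     (\<forall>a\<in>L. c (r a) a = a \<and> c a (s a) = a) \<and>
     (\<forall>a\<in>L. \<forall>b\<in>L. s a = r b \<longrightarrow> c a b \<in> L \<and> r (c a b) = r a \<and> s (c a b) = s b) \<and>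
     (\<forall>a\<in>L. \<forall>b\<in>L. \<forall>e\<in>L. s a = r b \<and> s b = r e \<longrightarrow> c (c a b) e = c a (c b e)) \<and>
     (\<forall>a\<in>L. d a \<in> degs k) \<and>
     (\<forall>a\<in>L. \<forall>b\<in>L. s a = r b \<longrightarrow> d (c a b) = (\<lambda>i. d a i + d b i)) \<and>
     (\<forall>a\<in>L. \<forall>m\<in>degs k. \<forall>n\<in>degs k. d a = (\<lambda>i. m i + n i) \<longrightarrow>
        (\<exists>!p. fst p \<in> L \<and> snd p \<in> L \<and> s (fst p) = r (snd p) \<and>
              d (fst p) = m \<and> d (snd p) = n \<and> c (fst p) (snd p) = a))"

definition row_finite ::
  "nat \<Rightarrow> 'p set \<Rightarrow> 'p set \<Rightarrow> ('p \<Rightarrow> 'p) \<Rightarrow> ('p \<Rightarrow> nat \<Rightarrow> nat) \<Rightarrow> bool" where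
  "row_finite k L V r d \<longleftrightarrow> (\<forall>v\<in>V. \<forall>m\<in>degs k. finite {a\<in>L. r a = v \<and> d a = m})"

definition source_free ::
  "nat \<Rightarrow> 'p set \<Rightarrow> 'p set \<Rightarrow> ('p \<Rightarrow> 'p) \<Rightarrow> ('p \<Rightarrow> nat \<Rightarrow> nat) \<Rightarrow> bool" where
  "source_free k L V r d \<longleftrightarrow> (\<forall>v\<in>V. \<forall>m\<in>degs k. {a\<in>L. r a = v \<and> d a = m} \<noteq> {})"

definition Rng :: "('p \<Rightarrow> 'x set) \<Rightarrow> ('p \<Rightarrow> 'x \<Rightarrow> 'x) \<Rightarrow> 'p \<Rightarrow> 'x set" where
  "Rng D tau a = tau a ` D a"

text \<open>The Radon-Nikodym condition d(mu o tau_a)/d mu > 0 a.e. is stated as: the measure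
  A |-> mu(tau_a(A)) on D_a has a density g w.r.t. mu that is positive a.e. on D_a.\<close>
definition sbfs :: "'x measure \<Rightarrow> 'p set \<Rightarrow> ('p \<Rightarrow> 'x set) \<Rightarrow> ('p \<Rightarrow> 'x \<Rightarrow> 'x)
    \<Rightarrow> ('x \<Rightarrow> 'x) \<Rightarrow> bool" where
  "sbfs M I D tau cod \<longleftrightarrow>
     cod \<in> measurable M M \<and>
     (\<forall>a\<in>I. D a \<in> sets M \<and> 0 < emeasure M (D a) \<and> emeasure M (D a) < \<infinity> \<and>
        tau a \<in> measurable (restrict_space M (D a)) M \<and>
        Rng D tau a \<in> sets M \<and> emeasure M (Rng D tau a) < \<infinity> \<and>
        (\<exists>g\<in>borel_measurable M. (AE x in M. x \<in> D a \<longrightarrow> 0 < g x) \<and>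
            (\<forall>A\<in>sets M. A \<subseteq> D a \<longrightarrow>
               emeasure M (tau a ` A) = (\<integral>\<^sup>+ x. g x * indicator A x \<partial>M))) \<and>
        (\<forall>x\<in>D a. cod (tau a x) = x)) \<and>
     (\<forall>a\<in>I. \<forall>b\<in>I. a \<noteq> b \<longrightarrow> emeasure M (Rng D tau a \<inter> Rng D tau b) = 0) \<and>
     emeasure M (space M - (\<Union>a\<in>I. Rng D tau a)) = 0"

definition Lambda_sbfs ::
  "nat \<Rightarrow> 'p set \<Rightarrow> 'p set \<Rightarrow> ('p \<Rightarrow> 'p) \<Rightarrow> ('p \<Rightarrow> 'p) \<Rightarrow> ('p \<Rightarrow> 'p \<Rightarrow> 'p)
    \<Rightarrow> ('p \<Rightarrow> nat \<Rightarrow> nat) \<Rightarrow> 'x measure \<Rightarrow> ('p \<Rightarrow> 'x set) \<Rightarrow> ('p \<Rightarrow> 'x \<Rightarrow> 'x)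
    \<Rightarrow> ((nat \<Rightarrow> nat) \<Rightarrow> 'x \<Rightarrow> 'x) \<Rightarrow> bool" where
  "Lambda_sbfs k L V r s c d M D tau tauc \<longleftrightarrow>
     (\<forall>m\<in>degs k. sbfs M {a\<in>L. d a = m} D tau (tauc m)) \<and>
     (\<forall>v\<in>V. \<forall>x\<in>D v. tau v x = x) \<and>
     (\<forall>a\<in>L. \<forall>b\<in>L. s a = r b \<longrightarrow>
        emeasure M (Rng D tau b - D a) = 0 \<and>
        (AE x in M. x \<in> D b \<longrightarrow> tau a (tau b x) = tau (c a b) x)) \<and>
     (\<forall>m\<in>degs k. \<forall>n\<in>degs k. \<forall>x\<in>space M. tauc m (tauc n x) = tauc (\<lambda>i. m i + n i) x)"

definition L2 :: "'x measure \<Rightarrow> ('x \<Rightarrow> complex) set" where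
  "L2 M = {f. f \<in> borel_measurable M \<and> integrable M (\<lambda>x. (cmod (f x))\<^sup>2)}"

definition L2_inner :: "'x measure \<Rightarrow> ('x \<Rightarrow> complex) \<Rightarrow> ('x \<Rightarrow> complex) \<Rightarrow> complex" where
  "L2_inner M f g = (\<integral>x. f x * cnj (g x) \<partial>M)"

definition proj_rep_data ::
  "'p set \<Rightarrow> ('p \<Rightarrow> 'p) \<Rightarrow> ('p \<Rightarrow> 'p) \<Rightarrow> ('p \<Rightarrow> 'p \<Rightarrow> 'p) \<Rightarrow> ('p \<Rightarrow> nat \<Rightarrow> nat)
    \<Rightarrow> 'x measure \<Rightarrow> ('p \<Rightarrow> 'x set) \<Rightarrow> ('p \<Rightarrow> 'x \<Rightarrow> 'x) \<Rightarrow> ((nat \<Rightarrow> nat) \<Rightarrow> 'x \<Rightarrow> 'x)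
    \<Rightarrow> ('p \<Rightarrow> 'x \<Rightarrow> complex) \<Rightarrow> bool" where
  "proj_rep_data L r s c d M D tau tauc f \<longleftrightarrow>
     (\<forall>a\<in>L. f a \<in> L2 M \<and> \<not> (AE x in M. f a x = 0) \<and>
        (\<forall>A\<in>sets M. emeasure M {y\<in>D a. tau a y \<in> A}
                     = (\<integral>\<^sup>+ x. ennreal ((cmod (f a x))\<^sup>2) * indicator A x \<partial>M))) \<and>
     (\<forall>a\<in>L. \<forall>b\<in>L. s a = r b \<longrightarrow>
        (AE x in M. f a x * f b (tauc (d a) x) = f (c a b) x))"

definition proj_rep_op ::
  "('p \<Rightarrow> nat \<Rightarrow> nat) \<Rightarrow> ((nat \<Rightarrow> nat) \<Rightarrow> 'x \<Rightarrow> 'x) \<Rightarrow> ('p \<Rightarrow> 'x \<Rightarrow> complex)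
    \<Rightarrow> 'p \<Rightarrow> ('x \<Rightarrow> complex) \<Rightarrow> ('x \<Rightarrow> complex)" where
  "proj_rep_op d tauc f a h = (\<lambda>x. f a x * h (tauc (d a) x))"

text \<open>Monic representation on L^2(X,mu): every T_a nonzero, and some xi whose
  vectors T_a T_a^* xi have dense linear span (S a denotes the adjoint of T a).\<close>
definition monic :: "'x measure \<Rightarrow> 'p set
    \<Rightarrow> ('p \<Rightarrow> ('x \<Rightarrow> complex) \<Rightarrow> ('x \<Rightarrow> complex)) \<Rightarrow> bool" where
  "monic M L T \<longleftrightarrow>
     (\<forall>a\<in>L. \<exists>h\<in>L2 M. \<not> (AE x in M. T a h x = 0)) \<and>
     (\<exists>xi\<in>L2 M. \<exists>S.
        (\<forall>a\<in>L. \<forall>g\<in>L2 M. S a g \<in> L2 M) \<and>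
        (\<forall>a\<in>L. \<forall>h\<in>L2 M. \<forall>g\<in>L2 M. L2_inner M (T a h) g = L2_inner M h (S a g)) \<and>
        (\<forall>h\<in>L2 M. \<forall>e>0. \<exists>F cf. finite F \<and> F \<subseteq> L \<and>
           (\<integral>x. (cmod (h x - (\<Sum>a\<in>F. cf a * T a (S a xi) x)))\<^sup>2 \<partial>M) < e))"

end

theory Submission
  imports Defs
begin

text \<open>Suppose the representation were monic with cyclic vector \<xi>. Because D_v contains a
  subset X_v of intermediate measure, L^2(D_v) is at least two-dimensional, so it contains a
  nonzero h orthogonal to \<xi>. For a path \<lambda> with r(\<lambda>) = v, T_\<lambda> T_\<lambda>^* is the
  projection onto L^2(R_\<lambda>) = L^2(D_v), hence <T_\<lambda> T_\<lambda>^* \<xi>, h> = <\<xi>, h> = 0. For any other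
  \<lambda>, the range R_\<lambda> lies a.e. in D_{r(\<lambda>)}, which is a.e. disjoint from D_v, so T_\<lambda> T_\<lambda>^* \<xi>
  vanishes on the support of h. Thus h is orthogonal to every T_\<lambda> T_\<lambda>^* \<xi>, and these
  vectors cannot span a dense subspace.\<close>

section \<open>Square-integrable functions\<close>

lemma borel_measurable_cnj [measurable]:
  "f \<in> borel_measurable M \<Longrightarrow> (\<lambda>x. cnj (f x)) \<in> borel_measurable M"
  by (rule borel_measurable_continuous_on[where f=cnj]) (auto intro: continuous_intros)

lemma L2_borel_measurable: "u \<in> L2 M \<Longrightarrow> u \<in> borel_measurable M"
  by (simp add: L2_def)

lemma L2_iff_nn_integral:
  "u \<in> L2 M \<longleftrightarrow> u \<in> borel_measurable M \<and> (\<integral>\<^sup>+ x. ennreal ((cmod (u x))\<^sup>2) \<partial>M) < \<infinity>"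
  by (auto simp: L2_def integrable_iff_bounded)

lemma integrable_L2_product:
  assumes "u \<in> L2 M" "w \<in> L2 M"
  shows "integrable M (\<lambda>x. u x * cnj (w x))"
proof (rule Bochner_Integration.integrable_bound)
  show "integrable M (\<lambda>x. (cmod (u x))\<^sup>2 + (cmod (w x))\<^sup>2)"
    using assms by (auto simp: L2_def)
  show "(\<lambda>x. u x * cnj (w x)) \<in> borel_measurable M"
    using assms[THEN L2_borel_measurable] by measurable
  have "cmod (u x) * cmod (w x) \<le> (cmod (u x))\<^sup>2 + (cmod (w x))\<^sup>2" for x
    using sum_squares_bound[of "cmod (u x)" "cmod (w x)"]
      mult_nonneg_nonneg[OF norm_ge_zero norm_ge_zero, of "u x" "w x"] by linarith
  then show "AE x in M. norm (u x * cnj (w x)) \<le> norm ((cmod (u x))\<^sup>2 + (cmod (w x))\<^sup>2)"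
    by (simp add: norm_mult)
qed

lemma L2_add:
  assumes "u \<in> L2 M" "w \<in> L2 M"
  shows "(\<lambda>x. u x + w x) \<in> L2 M"
  unfolding L2_def
proof safe
  show "(\<lambda>x. u x + w x) \<in> borel_measurable M"
    using assms by (auto simp: L2_def)
  show "integrable M (\<lambda>x. (cmod (u x + w x))\<^sup>2)"
  proof (rule Bochner_Integration.integrable_bound)
    show "integrable M (\<lambda>x. 2 * (cmod (u x))\<^sup>2 + 2 * (cmod (w x))\<^sup>2)"
      using assms by (auto simp: L2_def)
    show "(\<lambda>x. (cmod (u x + w x))\<^sup>2) \<in> borel_measurable M"
      using assms by (auto simp: L2_def)
    have "(cmod (u x + w x))\<^sup>2 \<le> 2 * (cmod (u x))\<^sup>2 + 2 * (cmod (w x))\<^sup>2" for x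
    proof -
      have "(cmod (u x + w x))\<^sup>2 \<le> (cmod (u x) + cmod (w x))\<^sup>2"
        by (simp add: power_mono norm_triangle_ineq)
      also have "\<dots> \<le> 2 * (cmod (u x))\<^sup>2 + 2 * (cmod (w x))\<^sup>2"
        using sum_squares_bound[of "cmod (u x)" "cmod (w x)"] by (simp add: power2_sum)
      finally show ?thesis .
    qed
    then show "AE x in M. norm ((cmod (u x + w x))\<^sup>2) \<le> norm (2 * (cmod (u x))\<^sup>2 + 2 * (cmod (w x))\<^sup>2)"
      by simp
  qed
qed

lemma L2_mult_const: "u \<in> L2 M \<Longrightarrow> (\<lambda>x. a * u x) \<in> L2 M"
  by (auto simp: L2_def norm_mult power_mult_distrib)

lemma L2_sum:
  assumes "\<And>i. i \<in> F \<Longrightarrow> u i \<in> L2 M"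
  shows "(\<lambda>x. \<Sum>i\<in>F. u i x) \<in> L2 M"
proof -
  have "(\<lambda>x. 0) \<in> L2 M"
    by (simp add: L2_def)
  with assms show ?thesis
    by (induction F rule: infinite_finite_induct) (simp_all add: L2_add)
qed

lemma L2_indicator:
  assumes "A \<in> sets M" "emeasure M A < \<infinity>"
  shows "(\<lambda>x. indicator A x :: complex) \<in> L2 M"
proof -
  have "(\<lambda>x. (cmod (indicator A x :: complex))\<^sup>2) = (indicator A :: _ \<Rightarrow> real)"
    by (auto simp: indicator_def)
  then show ?thesis
    using assms unfolding L2_def by auto
qed

lemma L2_inner_cnj: "cnj (L2_inner M u w) = L2_inner M w u"
  unfolding L2_inner_def Bochner_Integration.integral_cnj[symmetric] by (simp add: mult.commute)

lemma L2_inner_cong_AE: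
  assumes "u \<in> L2 M" "w \<in> L2 M" "w' \<in> L2 M" "AE x in M. w x = w' x"
  shows "L2_inner M u w = L2_inner M u w'"
proof -
  have [measurable]: "u \<in> borel_measurable M" "w \<in> borel_measurable M" "w' \<in> borel_measurable M"
    using assms by (auto simp: L2_def)
  have "AE x in M. u x * cnj (w x) = u x * cnj (w' x)"
    using assms(4) by eventually_elim simp
  then show ?thesis
    unfolding L2_inner_def by (rule integral_cong_AE[rotated 2]) measurable
qed

lemma L2_inner_sum_left:
  assumes "finite F" "\<And>i. i \<in> F \<Longrightarrow> u i \<in> L2 M" "w \<in> L2 M"
  shows "L2_inner M (\<lambda>x. \<Sum>i\<in>F. a i * u i x) w = (\<Sum>i\<in>F. a i * L2_inner M (u i) w)"
proof -
  have "L2_inner M (\<lambda>x. \<Sum>i\<in>F. a i * u i x) w = (\<integral>x. (\<Sum>i\<in>F. a i * (u i x * cnj (w x))) \<partial>M)"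
    unfolding L2_inner_def by (simp add: sum_distrib_right mult.assoc)
  also have "\<dots> = (\<Sum>i\<in>F. a i * L2_inner M (u i) w)"
    using assms unfolding L2_inner_def
    by (subst Bochner_Integration.integral_sum) (auto intro!: integrable_mult_right integrable_L2_product)
  finally show ?thesis .
qed

lemma L2_norm_le_dist_orthogonal:
  assumes h: "h \<in> L2 M" and u: "u \<in> L2 M" and orth: "L2_inner M u h = 0"
  shows "(\<integral>x. (cmod (h x))\<^sup>2 \<partial>M) \<le> (\<integral>x. (cmod (h x - u x))\<^sup>2 \<partial>M)"
proof -
  have int_h: "integrable M (\<lambda>x. (cmod (h x))\<^sup>2)" and int_u: "integrable M (\<lambda>x. (cmod (u x))\<^sup>2)"
    using h u by (simp_all add: L2_def)
  have int_uh: "integrable M (\<lambda>x. u x * cnj (h x))"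
    using u h by (rule integrable_L2_product)
  have int_Re: "integrable M (\<lambda>x. 2 * Re (u x * cnj (h x)))"
    by (intro integrable_mult_right integrable_Re int_uh)
  have "(cmod (h x - u x))\<^sup>2 = (cmod (h x))\<^sup>2 + (cmod (u x))\<^sup>2 - 2 * Re (u x * cnj (h x))" for x
    unfolding cmod_power2 by (simp add: power2_eq_square algebra_simps)
  then have "(\<integral>x. (cmod (h x - u x))\<^sup>2 \<partial>M)
      = (\<integral>x. (cmod (h x))\<^sup>2 + (cmod (u x))\<^sup>2 \<partial>M) - (\<integral>x. 2 * Re (u x * cnj (h x)) \<partial>M)"
    using Bochner_Integration.integral_diff[OF Bochner_Integration.integrable_add[OF int_h int_u] int_Re]
    by simp
  also have "\<dots> = (\<integral>x. (cmod (h x))\<^sup>2 \<partial>M) + (\<integral>x. (cmod (u x))\<^sup>2 \<partial>M) - 2 * Re (L2_inner M u h)"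
    unfolding L2_inner_def Bochner_Integration.integral_add[OF int_h int_u]
      integral_mult_right_zero integral_Re[OF int_uh] ..
  finally show ?thesis
    using orth integral_nonneg_AE[of "\<lambda>x. (cmod (u x))\<^sup>2" M] by simp
qed

lemma L2_norm_le_dist_orthogonal_span:
  assumes "h \<in> L2 M" "finite F" "\<And>i. i \<in> F \<Longrightarrow> u i \<in> L2 M" "\<And>i. i \<in> F \<Longrightarrow> L2_inner M (u i) h = 0"
  shows "(\<integral>x. (cmod (h x))\<^sup>2 \<partial>M) \<le> (\<integral>x. (cmod (h x - (\<Sum>i\<in>F. a i * u i x)))\<^sup>2 \<partial>M)"
  using assms by (intro L2_norm_le_dist_orthogonal L2_sum L2_mult_const) (auto simp: L2_inner_sum_left)

lemma integral_cmod_square_pos: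
  assumes "h \<in> L2 M" "A \<in> sets M" "0 < emeasure M A" "\<And>x. x \<in> A \<Longrightarrow> h x \<noteq> 0"
  shows "0 < (\<integral>x. (cmod (h x))\<^sup>2 \<partial>M)"
proof -
  have "{x\<in>space M. x \<in> A} = A"
    using sets.sets_into_space[OF assms(2)] by auto
  then have "\<not> (AE x in M. x \<notin> A)"
    using assms(2,3) by (simp add: AE_iff_measurable[OF _ refl])
  moreover have "AE x in M. x \<notin> A" if "AE x in M. (cmod (h x))\<^sup>2 = 0"
    using that by eventually_elim (use assms(4) in auto)
  ultimately have "\<not> (AE x in M. (cmod (h x))\<^sup>2 = 0)"
    by blast
  then show ?thesis
    using assms(1) by (simp add: L2_def integral_nonneg_eq_0_iff_AE less_le integral_nonneg_AE)
qed

lemma exists_L2_orthogonal_supported: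
  assumes \<xi>: "\<xi> \<in> L2 M" and X: "X \<in> sets M" "X \<subseteq> Y" "0 < emeasure M X"
    and Y: "Y \<in> sets M" "emeasure M X < emeasure M Y" "emeasure M Y < \<infinity>"
  obtains h where "h \<in> L2 M" "\<And>x. x \<notin> Y \<Longrightarrow> h x = 0" "L2_inner M \<xi> h = 0"
    "0 < (\<integral>x. (cmod (h x))\<^sup>2 \<partial>M)"
proof -
  define u :: "_ \<Rightarrow> complex" where "u = indicator X"
  define w :: "_ \<Rightarrow> complex" where "w = indicator (Y - X)"
  have "emeasure M (Y - X) = emeasure M Y - emeasure M X"
    using X Y by (intro emeasure_Diff) auto
  then have YX: "Y - X \<in> sets M" "0 < emeasure M (Y - X)" "emeasure M (Y - X) < \<infinity>"
    using X Y by (auto simp: diff_gr0_ennreal diff_less_top_ennreal)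
  have u: "u \<in> L2 M" and w: "w \<in> L2 M"
    using X Y YX unfolding u_def w_def by (auto intro!: L2_indicator)
  define p where "p = L2_inner M \<xi> u"
  define q where "q = L2_inner M \<xi> w"
  show ?thesis
  proof (cases "p = 0")
    case True
    show ?thesis
    proof (rule that[of u])
      show "u x = 0" if "x \<notin> Y" for x
        using that X(2) by (auto simp: u_def indicator_def)
      show "0 < (\<integral>x. (cmod (u x))\<^sup>2 \<partial>M)"
        by (rule integral_cmod_square_pos[OF u X(1,3)]) (simp add: u_def)
    qed (use u True in \<open>simp_all add: p_def\<close>)
  next
    case False
    define h where "h = (\<lambda>x. cnj q * u x - cnj p * w x)"
    have h: "h \<in> L2 M"
      using L2_add[OF L2_mult_const[OF u] L2_mult_const[OF w, of "- cnj p"]] by (simp add: h_def)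
    show ?thesis
    proof (rule that[of h])
      show "h x = 0" if "x \<notin> Y" for x
        using that X(2) by (auto simp: h_def u_def w_def indicator_def)
      have "L2_inner M \<xi> h = (\<integral>x. q * (\<xi> x * cnj (u x)) - p * (\<xi> x * cnj (w x)) \<partial>M)"
        unfolding L2_inner_def h_def by (simp add: algebra_simps)
      then show "L2_inner M \<xi> h = 0"
        using integrable_L2_product[OF \<xi> u] integrable_L2_product[OF \<xi> w]
        by (simp add: p_def q_def L2_inner_def)
      show "0 < (\<integral>x. (cmod (h x))\<^sup>2 \<partial>M)"
        using False by (intro integral_cmod_square_pos[OF h YX(1,2)]) (simp add: h_def u_def w_def)
    qed (rule h)
  qed
qed

section \<open>A single branch of a semibranching function system\<close>

text \<open>A prefixing map \<tau> with coding map cod, and a function f with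
  |f|^2 = d(\<mu> \<circ> \<tau>^-1)/d\<mu>; T is the associated operator T_\<lambda>.\<close>

locale semibranching_map =
  fixes M :: "'x measure" and f :: "'x \<Rightarrow> complex" and Dom :: "'x set"
    and \<tau> :: "'x \<Rightarrow> 'x" and cod :: "'x \<Rightarrow> 'x"
  assumes f_measurable [measurable]: "f \<in> borel_measurable M"
    and Dom_sets [measurable]: "Dom \<in> sets M"
    and range_sets [measurable]: "\<tau> ` Dom \<in> sets M"
    and \<tau>_measurable: "\<tau> \<in> measurable (restrict_space M Dom) M"
    and cod_measurable [measurable]: "cod \<in> measurable M M"
    and cod_\<tau>: "\<And>y. y \<in> Dom \<Longrightarrow> cod (\<tau> y) = y"
    and image_null: "\<And>A. A \<in> null_sets M \<Longrightarrow> A \<subseteq> Dom \<Longrightarrow> emeasure M (\<tau> ` A) = 0"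
    and emeasure_preimage:
      "\<And>A. A \<in> sets M \<Longrightarrow>
        emeasure M {y\<in>Dom. \<tau> y \<in> A} = (\<integral>\<^sup>+ x. ennreal ((cmod (f x))\<^sup>2) * indicator A x \<partial>M)"
begin

abbreviation T :: "('x \<Rightarrow> complex) \<Rightarrow> 'x \<Rightarrow> complex" where
  "T h \<equiv> \<lambda>x. f x * h (cod x)"

lemma density_eq_distr:
  "density M (\<lambda>x. ennreal ((cmod (f x))\<^sup>2)) = distr (restrict_space M Dom) M \<tau>"
proof (rule measure_eqI)
  fix A assume "A \<in> sets (density M (\<lambda>x. ennreal ((cmod (f x))\<^sup>2)))"
  then have A: "A \<in> sets M" by simp
  have "emeasure (distr (restrict_space M Dom) M \<tau>) A = emeasure M (\<tau> -` A \<inter> Dom)"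
    using sets.sets_into_space[OF Dom_sets]
    by (simp add: emeasure_distr[OF \<tau>_measurable A] emeasure_restrict_space space_restrict_space
        Int_absorb2)
  also have "\<tau> -` A \<inter> Dom = {y\<in>Dom. \<tau> y \<in> A}"
    by auto
  finally show "emeasure (density M (\<lambda>x. ennreal ((cmod (f x))\<^sup>2))) A
      = emeasure (distr (restrict_space M Dom) M \<tau>) A"
    using A by (simp add: emeasure_density emeasure_preimage)
qed simp

lemma nn_integral_density_\<tau>:
  assumes [measurable]: "\<psi> \<in> borel_measurable M"
  shows "(\<integral>\<^sup>+ x. ennreal ((cmod (f x))\<^sup>2) * \<psi> x \<partial>M) = (\<integral>\<^sup>+ y. \<psi> (\<tau> y) * indicator Dom y \<partial>M)"
proof -
  have "(\<integral>\<^sup>+ x. ennreal ((cmod (f x))\<^sup>2) * \<psi> x \<partial>M)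
      = integral\<^sup>N (distr (restrict_space M Dom) M \<tau>) \<psi>"
    by (simp add: nn_integral_density density_eq_distr[symmetric])
  also have "\<dots> = (\<integral>\<^sup>+ y. \<psi> (\<tau> y) \<partial>restrict_space M Dom)"
    by (rule nn_integral_distr[OF \<tau>_measurable]) simp
  finally show ?thesis
    by (simp add: nn_integral_restrict_space)
qed

lemma nn_integral_density_cod:
  assumes [measurable]: "\<phi> \<in> borel_measurable M"
  shows "(\<integral>\<^sup>+ x. ennreal ((cmod (f x))\<^sup>2) * \<phi> (cod x) \<partial>M) = (\<integral>\<^sup>+ y. \<phi> y * indicator Dom y \<partial>M)"
proof -
  have "(\<integral>\<^sup>+ x. ennreal ((cmod (f x))\<^sup>2) * \<phi> (cod x) \<partial>M)
      = (\<integral>\<^sup>+ y. \<phi> (cod (\<tau> y)) * indicator Dom y \<partial>M)"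
    by (rule nn_integral_density_\<tau>) measurable
  also have "\<dots> = (\<integral>\<^sup>+ y. \<phi> y * indicator Dom y \<partial>M)"
    by (rule nn_integral_cong) (auto simp: cod_\<tau> indicator_def)
  finally show ?thesis .
qed

lemma integral_density_cod:
  fixes \<phi> :: "'x \<Rightarrow> complex"
  assumes [measurable]: "\<phi> \<in> borel_measurable M"
  shows "(\<integral>x. (cmod (f x))\<^sup>2 *\<^sub>R \<phi> (cod x) \<partial>M) = (\<integral>y. indicator Dom y *\<^sub>R \<phi> y \<partial>M)"
proof -
  have "(\<integral>x. (cmod (f x))\<^sup>2 *\<^sub>R \<phi> (cod x) \<partial>M)
      = integral\<^sup>L (distr (restrict_space M Dom) M \<tau>) (\<lambda>x. \<phi> (cod x))"
    by (simp add: integral_density density_eq_distr[symmetric])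
  also have "\<dots> = (\<integral>y. \<phi> (cod (\<tau> y)) \<partial>restrict_space M Dom)"
    by (rule integral_distr[OF \<tau>_measurable]) simp
  also have "\<dots> = (\<integral>y. indicator Dom y *\<^sub>R \<phi> (cod (\<tau> y)) \<partial>M)"
    by (rule integral_restrict_space) simp
  also have "\<dots> = (\<integral>y. indicator Dom y *\<^sub>R \<phi> y \<partial>M)"
    by (rule Bochner_Integration.integral_cong) (auto simp: cod_\<tau> indicator_def)
  finally show ?thesis .
qed

lemma L2_T:
  assumes g: "g \<in> L2 M"
  shows "T g \<in> L2 M"
proof -
  have [measurable]: "g \<in> borel_measurable M"
    using g by (rule L2_borel_measurable)
  have "(\<integral>\<^sup>+ x. ennreal ((cmod (T g x))\<^sup>2) \<partial>M)
      = (\<integral>\<^sup>+ x. ennreal ((cmod (f x))\<^sup>2) * ennreal ((cmod (g (cod x)))\<^sup>2) \<partial>M)"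
    by (simp add: norm_mult power_mult_distrib ennreal_mult)
  also have "\<dots> = (\<integral>\<^sup>+ y. ennreal ((cmod (g y))\<^sup>2) * indicator Dom y \<partial>M)"
    by (rule nn_integral_density_cod) measurable
  also have "\<dots> \<le> (\<integral>\<^sup>+ y. ennreal ((cmod (g y))\<^sup>2) \<partial>M)"
    by (intro nn_integral_mono) (auto simp: indicator_def)
  also have "\<dots> < \<infinity>"
    using g by (simp add: L2_iff_nn_integral)
  finally show ?thesis
    by (simp add: L2_iff_nn_integral)
qed

lemma L2_inner_T_T:
  assumes [measurable]: "g \<in> borel_measurable M" "k \<in> borel_measurable M"
    and "\<And>y. y \<notin> Dom \<Longrightarrow> k y = 0"
  shows "L2_inner M (T g) (T k) = L2_inner M g k"
proof -
  have "L2_inner M (T g) (T k) = (\<integral>x. (cmod (f x))\<^sup>2 *\<^sub>R (g (cod x) * cnj (k (cod x))) \<partial>M)"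
    unfolding L2_inner_def
    by (rule Bochner_Integration.integral_cong)
       (auto simp: scaleR_conv_of_real complex_norm_square algebra_simps simp del: of_real_power)
  also have "\<dots> = (\<integral>y. indicator Dom y *\<^sub>R (g y * cnj (k y)) \<partial>M)"
    by (rule integral_density_cod) measurable
  also have "\<dots> = L2_inner M g k"
    unfolding L2_inner_def
    by (rule Bochner_Integration.integral_cong) (auto simp: assms(3) indicator_def)
  finally show ?thesis .
qed

lemma f_zero_off_range: "AE x in M. x \<notin> \<tau> ` Dom \<longrightarrow> f x = 0"
proof -
  have "space M - \<tau> ` Dom \<in> sets M"
    by simp
  then have "(\<integral>\<^sup>+ x. ennreal ((cmod (f x))\<^sup>2) * indicator (space M - \<tau> ` Dom) x \<partial>M)
      = emeasure M {y\<in>Dom. \<tau> y \<in> space M - \<tau> ` Dom}"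
    by (rule emeasure_preimage[symmetric])
  also have "{y\<in>Dom. \<tau> y \<in> space M - \<tau> ` Dom} = {}"
    by auto
  finally have "(\<integral>\<^sup>+ x. ennreal ((cmod (f x))\<^sup>2) * indicator (space M - \<tau> ` Dom) x \<partial>M) = 0"
    by simp
  then have "AE x in M. ennreal ((cmod (f x))\<^sup>2) * indicator (space M - \<tau> ` Dom) x = 0"
    by (subst (asm) nn_integral_0_iff_AE) auto
  then show ?thesis
    by (rule AE_mp) (auto intro!: AE_I2 simp: indicator_def)
qed

lemma f_nonzero_on_range: "AE x in M. x \<in> \<tau> ` Dom \<longrightarrow> f x \<noteq> 0"
proof -
  define B where "B = {x\<in>\<tau> ` Dom. f x = 0}"
  have B_sets [measurable]: "B \<in> sets M"
    unfolding B_def by measurable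
  define A where "A = {y\<in>Dom. \<tau> y \<in> B}"
  have "A = \<tau> -` B \<inter> space (restrict_space M Dom)"
    using sets.sets_into_space[OF Dom_sets] by (auto simp: A_def space_restrict_space)
  then have "A \<in> sets M"
    using measurable_sets[OF \<tau>_measurable B_sets] by (simp add: sets_restrict_space_iff)
  moreover have "emeasure M A = (\<integral>\<^sup>+ x. 0 \<partial>M)"
    unfolding A_def emeasure_preimage[OF B_sets]
    by (rule nn_integral_cong) (auto simp: B_def indicator_def)
  ultimately have "emeasure M (\<tau> ` A) = 0"
    by (intro image_null) (auto simp: A_def)
  moreover have "\<tau> ` A = B"
    unfolding A_def B_def by auto
  ultimately have "emeasure M B = 0"
    by simp
  then have "B \<in> null_sets M"
    by (intro null_setsI B_sets)
  then show ?thesis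
    by (rule AE_I'[OF _]) (auto simp: B_def)
qed

lemma T_surjective:
  assumes h: "h \<in> L2 M" and h_zero: "\<And>x. x \<notin> \<tau> ` Dom \<Longrightarrow> h x = 0"
  obtains k where "k \<in> L2 M" "\<And>y. y \<notin> Dom \<Longrightarrow> k y = 0" "AE x in M. f x * k (cod x) = h x"
proof -
  have [measurable]: "h \<in> borel_measurable M"
    using h by (rule L2_borel_measurable)
  define k where "k y = (if y \<in> Dom then h (\<tau> y) / f (\<tau> y) else 0)" for y
  have "(\<lambda>y. h (\<tau> y) / f (\<tau> y)) \<in> measurable (restrict_space M Dom) borel"
    by (rule measurable_compose[OF \<tau>_measurable]) measurable
  then have [measurable]: "k \<in> borel_measurable M"
    unfolding k_def by (subst (asm) measurable_restrict_space_iff) auto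
  have "(\<integral>\<^sup>+ y. ennreal ((cmod (k y))\<^sup>2) \<partial>M)
      = (\<integral>\<^sup>+ y. ennreal ((cmod (h (\<tau> y) / f (\<tau> y)))\<^sup>2) * indicator Dom y \<partial>M)"
    by (rule nn_integral_cong) (auto simp: k_def indicator_def)
  also have "\<dots> = (\<integral>\<^sup>+ x. ennreal ((cmod (f x))\<^sup>2) * ennreal ((cmod (h x / f x))\<^sup>2) \<partial>M)"
    by (rule nn_integral_density_\<tau>[symmetric]) measurable
  also have "\<dots> \<le> (\<integral>\<^sup>+ x. ennreal ((cmod (h x))\<^sup>2) \<partial>M)"
  proof (rule nn_integral_mono)
    fix x
    show "ennreal ((cmod (f x))\<^sup>2) * ennreal ((cmod (h x / f x))\<^sup>2) \<le> ennreal ((cmod (h x))\<^sup>2)"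
      by (cases "f x = 0") (auto simp: ennreal_mult[symmetric] norm_divide power_divide)
  qed
  also have "\<dots> < \<infinity>"
    using h by (simp add: L2_iff_nn_integral)
  finally have "k \<in> L2 M"
    by (simp add: L2_iff_nn_integral)
  moreover have "AE x in M. f x * k (cod x) = h x"
    using f_zero_off_range f_nonzero_on_range
  proof eventually_elim
    case (elim x)
    show ?case
    proof (cases "x \<in> \<tau> ` Dom")
      case True
      then obtain y where "y \<in> Dom" "x = \<tau> y"
        by auto
      then show ?thesis
        using elim True by (auto simp: k_def cod_\<tau>)
    qed (use elim h_zero in auto)
  qed
  ultimately show ?thesis
    using that[of k] by (simp add: k_def)
qed

lemma L2_inner_T_adjoint:
  assumes "\<xi> \<in> L2 M" "y \<in> L2 M" and adjoint: "\<And>k. k \<in> L2 M \<Longrightarrow> L2_inner M (T k) \<xi> = L2_inner M k y"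
    and h: "h \<in> L2 M" "\<And>x. x \<notin> \<tau> ` Dom \<Longrightarrow> h x = 0"
  shows "L2_inner M (T y) h = L2_inner M \<xi> h"
proof -
  obtain k where k: "k \<in> L2 M" "\<And>y. y \<notin> Dom \<Longrightarrow> k y = 0" and Tk: "AE x in M. f x * k (cod x) = h x"
    using T_surjective[OF h] by blast
  have "L2_inner M (T y) h = L2_inner M (T y) (T k)"
    using Tk assms L2_T k by (intro L2_inner_cong_AE) (auto elim: AE_mp)
  also have "\<dots> = L2_inner M y k"
    using assms k by (intro L2_inner_T_T) (auto simp: L2_borel_measurable)
  also have "\<dots> = cnj (L2_inner M (T k) \<xi>)"
    by (simp add: adjoint k L2_inner_cnj)
  also have "\<dots> = L2_inner M \<xi> (T k)"
    by (simp add: L2_inner_cnj)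
  also have "\<dots> = L2_inner M \<xi> h"
    using Tk assms L2_T k by (intro L2_inner_cong_AE) auto
  finally show ?thesis .
qed

lemma L2_inner_T_disjoint:
  assumes "\<And>x. x \<notin> E \<Longrightarrow> h x = 0" "AE x in M. x \<in> \<tau> ` Dom \<longrightarrow> x \<notin> E"
  shows "L2_inner M (T y) h = 0"
  unfolding L2_inner_def
  by (rule integral_eq_zero_AE) (use f_zero_off_range assms in \<open>auto elim!: AE_mp\<close>)

end

section \<open>Semibranching function systems on k-graphs\<close>

lemma kgraph_vertex_degree:
  assumes "kgraph k L V r s c d" "w \<in> V"
  shows "d w = (\<lambda>i. 0)"
proof -
  have w: "w \<in> L" "r w = w" "s w = w"
    using assms unfolding kgraph_def by auto
  then have "c w w = w"
    using assms(1) unfolding kgraph_def by metis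
  then have "d w = (\<lambda>i. d w i + d w i)"
    using assms(1) w unfolding kgraph_def by metis
  then show ?thesis
    by (metis add_cancel_left_left)
qed

lemma sbfsD:
  assumes "sbfs M I D tau cod" "a \<in> I"
  shows "D a \<in> sets M" "emeasure M (D a) < \<infinity>" "Rng D tau a \<in> sets M"
  using assms unfolding sbfs_def by auto

lemma sbfs_ranges_disjoint:
  assumes "sbfs M I D tau cod" "a \<in> I" "b \<in> I" "a \<noteq> b"
  shows "emeasure M (Rng D tau a \<inter> Rng D tau b) = 0"
  using assms unfolding sbfs_def by blast

lemma Lambda_sbfs_sbfs:
  assumes "kgraph k L V r s c d" "Lambda_sbfs k L V r s c d M D tau tauc" "a \<in> L"
  shows "sbfs M {b\<in>L. d b = d a} D tau (tauc (d a))"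
  using assms unfolding kgraph_def Lambda_sbfs_def by blast

lemma Lambda_sbfs_vertex_range:
  assumes "Lambda_sbfs k L V r s c d M D tau tauc" "w \<in> V"
  shows "Rng D tau w = D w"
  using assms unfolding Lambda_sbfs_def Rng_def by force

lemma Lambda_sbfs_range_in_vertex_domain:
  assumes kg: "kgraph k L V r s c d" and LS: "Lambda_sbfs k L V r s c d M D tau tauc"
    and a: "a \<in> L"
  shows "AE x in M. x \<in> Rng D tau a \<longrightarrow> x \<in> D (r a)"
proof -
  have ra: "r a \<in> L" "s (r a) = r a"
    using kg a unfolding kgraph_def by auto
  then have "emeasure M (Rng D tau a - D (r a)) = 0"
    using LS a unfolding Lambda_sbfs_def by blast
  moreover have "Rng D tau a - D (r a) \<in> sets M"
    using sbfsD[OF Lambda_sbfs_sbfs[OF kg LS a]] sbfsD[OF Lambda_sbfs_sbfs[OF kg LS ra(1)]] a ra(1)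
    by auto
  ultimately show ?thesis
    by (intro AE_I'[of "Rng D tau a - D (r a)"]) auto
qed

lemma Lambda_sbfs_vertex_domains_disjoint:
  assumes kg: "kgraph k L V r s c d" and LS: "Lambda_sbfs k L V r s c d M D tau tauc"
    and "v \<in> V" "w \<in> V" "v \<noteq> w"
  shows "AE x in M. x \<in> D w \<longrightarrow> x \<notin> D v"
proof -
  have "v \<in> L" "w \<in> L"
    using kg assms(3,4) unfolding kgraph_def by auto
  moreover have "d v = d w"
    using kgraph_vertex_degree[OF kg] assms(3,4) by simp
  ultimately have sb: "sbfs M {b\<in>L. d b = d w} D tau (tauc (d w))" "v \<in> {b\<in>L. d b = d w}"
    "w \<in> {b\<in>L. d b = d w}"
    using Lambda_sbfs_sbfs[OF kg LS] by auto
  then have "emeasure M (D w \<inter> D v) = 0"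
    using sbfs_ranges_disjoint[OF sb(1,3,2)] assms(3-5) Lambda_sbfs_vertex_range[OF LS] by simp
  moreover have "D w \<inter> D v \<in> sets M"
    using sbfsD[OF sb(1)] sb(2,3) by auto
  ultimately show ?thesis
    by (intro AE_I'[of "D w \<inter> D v"]) auto
qed

lemma Lambda_sbfs_semibranching_map:
  assumes kg: "kgraph k L V r s c d" and LS: "Lambda_sbfs k L V r s c d M D tau tauc"
    and f: "proj_rep_data L r s c d M D tau tauc f" and a: "a \<in> L"
  shows "semibranching_map M (f a) (D a) (tau a) (tauc (d a))"
proof -
  have sb: "sbfs M {b\<in>L. d b = d a} D tau (tauc (d a))"
    using Lambda_sbfs_sbfs[OF kg LS a] .
  moreover have "a \<in> {b\<in>L. d b = d a}"
    using a by simp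
  ultimately obtain g where
    "\<forall>A\<in>sets M. A \<subseteq> D a \<longrightarrow> emeasure M (tau a ` A) = (\<integral>\<^sup>+ x. g x * indicator A x \<partial>M)"
    unfolding sbfs_def by blast
  then have "emeasure M (tau a ` A) = 0" if "A \<in> null_sets M" "A \<subseteq> D a" for A
    using that null_setsD2[OF that(1)] nn_integral_null_set[OF that(1), of g] by simp
  then show ?thesis
    using sb a f unfolding semibranching_map_def sbfs_def proj_rep_data_def Rng_def L2_def
    by auto
qed

lemma proj_rep_op_L2:
  assumes "kgraph k L V r s c d" "Lambda_sbfs k L V r s c d M D tau tauc"
    and "proj_rep_data L r s c d M D tau tauc f" "a \<in> L" "g \<in> L2 M"
  shows "proj_rep_op d tauc f a g \<in> L2 M"
  unfolding proj_rep_op_def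
  using semibranching_map.L2_T[OF Lambda_sbfs_semibranching_map[OF assms(1-4)] assms(5)] .

lemma proj_rep_op_adjoint_orthogonal:
  assumes kg: "kgraph k L V r s c d" and LS: "Lambda_sbfs k L V r s c d M D tau tauc"
    and f: "proj_rep_data L r s c d M D tau tauc f"
    and v: "v \<in> V" and ranges: "\<And>t. t \<in> L \<Longrightarrow> r t = v \<Longrightarrow> Rng D tau t = D v"
    and a: "a \<in> L" and "\<xi> \<in> L2 M" "y \<in> L2 M"
    and adjoint: "\<And>k. k \<in> L2 M \<Longrightarrow> L2_inner M (proj_rep_op d tauc f a k) \<xi> = L2_inner M k y"
    and h: "h \<in> L2 M" "\<And>x. x \<notin> D v \<Longrightarrow> h x = 0" "L2_inner M \<xi> h = 0"
  shows "L2_inner M (proj_rep_op d tauc f a y) h = 0"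
proof -
  interpret semibranching_map M "f a" "D a" "tau a" "tauc (d a)"
    using Lambda_sbfs_semibranching_map[OF kg LS f a] .
  show ?thesis
  proof (cases "r a = v")
    case True
    then have "tau a ` D a = D v"
      using ranges[OF a] by (simp add: Rng_def)
    then show ?thesis
      using L2_inner_T_adjoint[of \<xi> y h] assms(7,8) adjoint h unfolding proj_rep_op_def by simp
  next
    case False
    have "r a \<in> V"
      using kg a unfolding kgraph_def by auto
    have "AE x in M. x \<in> tau a ` D a \<longrightarrow> x \<notin> D v"
      using Lambda_sbfs_range_in_vertex_domain[OF kg LS a]
        Lambda_sbfs_vertex_domains_disjoint[OF kg LS v \<open>r a \<in> V\<close> not_sym[OF False]]
      by eventually_elim (auto simp: Rng_def)
    then show ?thesis
      using L2_inner_T_disjoint h(2) unfolding proj_rep_op_def by blast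
  qed
qed

theorem proposition3p9:
  fixes k :: nat and L V :: "'p set" and r s :: "'p \<Rightarrow> 'p" and c :: "'p \<Rightarrow> 'p \<Rightarrow> 'p"
    and d :: "'p \<Rightarrow> nat \<Rightarrow> nat" and M :: "'x measure" and D :: "'p \<Rightarrow> 'x set"
    and tau :: "'p \<Rightarrow> 'x \<Rightarrow> 'x" and tauc :: "(nat \<Rightarrow> nat) \<Rightarrow> 'x \<Rightarrow> 'x"
    and v :: 'p and Xv :: "'x set"
  assumes "kgraph k L V r s c d"
    and "row_finite k L V r d"
    and "source_free k L V r d"
    and "sigma_finite_measure M"
    and "Lambda_sbfs k L V r s c d M D tau tauc"
    and "v \<in> V"
    and "\<forall>t\<in>L. r t = v \<longrightarrow> Rng D tau t = Rng D tau (c v t) \<and> Rng D tau (c v t) = D v"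
    and "Xv \<in> sets M" and "Xv \<subseteq> D v"
    and "0 < emeasure M Xv" and "emeasure M Xv < emeasure M (D v)"
  shows "\<forall>f. proj_rep_data L r s c d M D tau tauc f \<longrightarrow> \<not> monic M L (proj_rep_op d tauc f)"
proof (intro allI impI notI)
  fix f
  assume f: "proj_rep_data L r s c d M D tau tauc f" and "monic M L (proj_rep_op d tauc f)"
  then obtain \<xi> S where \<xi>: "\<xi> \<in> L2 M" and S: "\<forall>a\<in>L. \<forall>g\<in>L2 M. S a g \<in> L2 M"
    and adjoint: "\<forall>a\<in>L. \<forall>h\<in>L2 M. \<forall>g\<in>L2 M.
      L2_inner M (proj_rep_op d tauc f a h) g = L2_inner M h (S a g)"
    and dense: "\<forall>h\<in>L2 M. \<forall>e>0. \<exists>F cf. finite F \<and> F \<subseteq> L \<and>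
      (\<integral>x. (cmod (h x - (\<Sum>a\<in>F. cf a * proj_rep_op d tauc f a (S a \<xi>) x)))\<^sup>2 \<partial>M) < e"
    unfolding monic_def by blast
  have "v \<in> L"
    using assms(1,6) unfolding kgraph_def by auto
  then have "D v \<in> sets M" "emeasure M (D v) < \<infinity>"
    using sbfsD[OF Lambda_sbfs_sbfs[OF assms(1,5)]] by auto
  then obtain h where h: "h \<in> L2 M" "\<And>x. x \<notin> D v \<Longrightarrow> h x = 0" "L2_inner M \<xi> h = 0"
    and h_pos: "0 < (\<integral>x. (cmod (h x))\<^sup>2 \<partial>M)"
    using exists_L2_orthogonal_supported[OF \<xi> assms(8,9,10) _ assms(11)] by metis
  have orth: "L2_inner M (proj_rep_op d tauc f a (S a \<xi>)) h = 0" if "a \<in> L" for a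
    using proj_rep_op_adjoint_orthogonal[OF assms(1,5) f assms(6) _ that \<xi> _ _ h] assms(7) S adjoint \<xi> that
    by auto
  obtain F cf where F: "finite F" "F \<subseteq> L" and approx:
    "(\<integral>x. (cmod (h x - (\<Sum>a\<in>F. cf a * proj_rep_op d tauc f a (S a \<xi>) x)))\<^sup>2 \<partial>M)
      < (\<integral>x. (cmod (h x))\<^sup>2 \<partial>M)"
    using dense[rule_format, OF h(1) h_pos] by blast
  have "proj_rep_op d tauc f a (S a \<xi>) \<in> L2 M" if "a \<in> L" for a
    using proj_rep_op_L2[OF assms(1,5) f that] S \<xi> that by blast
  then have "(\<integral>x. (cmod (h x))\<^sup>2 \<partial>M)
      \<le> (\<integral>x. (cmod (h x - (\<Sum>a\<in>F. cf a * proj_rep_op d tauc f a (S a \<xi>) x)))\<^sup>2 \<partial>M)"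
    using F orth by (intro L2_norm_le_dist_orthogonal_span[OF h(1) F(1)]) auto
  with approx show False
    by linarith
qed

end
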